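(* Let $k$ be a positive integer and let $p>k(k+1)$ be a positive integer. Then for every integer $n$ there is an integer $m$ with $\mathbf r_k\!\left(\tfrac{n}{k+1}\right)=\mathbf r_k\!\left(\tfrac{m}{p}\right)$; that is, $\mathbf r_k\!\left(\tfrac1{k+1}\mathbb{Z}\right)\subseteq\mathbf r_k\!\left(\tfrac1p\mathbb{Z}\right)$.
   Context: For $x\in\mathbb{R}$, $\{x\}=x-\lfloor x\rfloor$ is the fractional part, and for $t\in\mathbb{R}$, $\mathbf r_k(t):=\big(\lfloor (k+1)\{t\}\rfloor,\lfloor (k+1)\{2t\}\rfloor,\ldots,\lfloor (k+1)\{kt\}\rfloor\big)\in\{0,\ldots,k\}^k$. *)

theory Defs
  imports Complex_Main
begin

text \<open>The vector
  r_k(t) = (floor((k+1){t}), ..., floor((k+1){kt})) is represented as the list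
  of its k entries, the j-th entry (j = 1..k) being floor((k+1) * frac(j*t)).\<close>

definition r_vec :: "nat \<Rightarrow> real \<Rightarrow> int list" where
  "r_vec k t = map (\<lambda>j. \<lfloor>real (k + 1) * frac (real j * t)\<rfloor>) [1..<k+1]"

end

theory Submission
  imports Defs
begin

text \<open>Put \<open>t = n/(k+1)\<close> and let \<open>s = m/p\<close> be the first point of \<open>(1/p)\<int>\<close> to the right of \<open>t\<close>,
  so \<open>0 \<le> s - t < 1/p\<close>. The \<open>j\<close>-th entry of \<open>r\<^sub>k(x)\<close> is \<open>\<lfloor>(k+1)jx\<rfloor> mod (k+1)\<close>, and for
  \<open>j \<le> k\<close> the number \<open>(k+1)jt = jn\<close> is an integer while \<open>0 \<le> (k+1)j(s - t) < k(k+1)/p < 1\<close>;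
  hence \<open>\<lfloor>(k+1)js\<rfloor> = jn = \<lfloor>(k+1)jt\<rfloor>\<close> for all \<open>j \<le> k\<close>, and \<open>r\<^sub>k(s) = r\<^sub>k(t)\<close>.\<close>

lemma floor_mult_frac: "\<lfloor>real d * frac y\<rfloor> = \<lfloor>real d * y\<rfloor> mod int d"
proof (cases "d = 0")
  case False
  have "\<lfloor>y\<rfloor> = \<lfloor>real d * y / real_of_int (int d)\<rfloor>"
    using False by simp
  also have "\<dots> = \<lfloor>real d * y\<rfloor> div int d"
    by (rule floor_divide_real_eq_div) simp
  finally have "real d * frac y = real d * y - of_int (int d * (\<lfloor>real d * y\<rfloor> div int d))"
    by (simp add: frac_def algebra_simps)
  then show ?thesis
    by (simp only: floor_diff_of_int minus_mult_div_eq_mod)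
qed simp

lemma r_vec_eq_if_floor_eq:
  assumes "\<And>j. 1 \<le> j \<Longrightarrow> j \<le> k \<Longrightarrow>
    \<lfloor>real (k + 1) * (real j * s)\<rfloor> = \<lfloor>real (k + 1) * (real j * t)\<rfloor>"
  shows "r_vec k s = r_vec k t"
  unfolding r_vec_def floor_mult_frac using assms by (auto intro: map_cong)

lemma r_vec_eq_right_of_grid_point:
  fixes k :: nat and n :: int and s :: real
  defines "t \<equiv> real_of_int n / real (k + 1)"
  assumes "t \<le> s" and "real (k + 1) * real k * (s - t) < 1"
  shows "r_vec k s = r_vec k t"
proof (rule r_vec_eq_if_floor_eq)
  fix j assume "j \<le> k"
  have grid: "real (k + 1) * (real j * t) = of_int (int j * n)"
    by (simp add: t_def)
  have "real (k + 1) * real j * (s - t) \<le> real (k + 1) * real k * (s - t)"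
    using \<open>t \<le> s\<close> \<open>j \<le> k\<close> by (simp add: mult_right_mono)
  with assms(3) have "real (k + 1) * real j * (s - t) < 1"
    by linarith
  moreover have "real (k + 1) * (real j * t) \<le> real (k + 1) * (real j * s)"
    using \<open>t \<le> s\<close> by (simp add: mult_left_mono)
  ultimately show "\<lfloor>real (k + 1) * (real j * s)\<rfloor> = \<lfloor>real (k + 1) * (real j * t)\<rfloor>"
    using grid by (simp add: floor_eq_iff algebra_simps)
qed

theorem mainTheorem11:
  fixes k p :: nat
  assumes "k \<ge> 1" and "p > k * (k + 1)"
  shows "\<forall>n::int. \<exists>m::int. r_vec k (real_of_int n / real (k + 1)) = r_vec k (real_of_int m / real p)"
proof
  fix n :: int
  define t where "t = real_of_int n / real (k + 1)"
  define m where "m = \<lceil>t * real p\<rceil>"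
  define s where "s = real_of_int m / real p"
  have kp: "real (k + 1) * real k < real p"
    using assms(2) by (metis mult.commute of_nat_less_iff of_nat_mult)
  have p_pos: "real p > 0"
    using assms(2) by simp
  have "t * real p \<le> of_int m" and "of_int m < t * real p + 1"
    unfolding m_def by linarith+
  moreover have "(s - t) * real p = of_int m - t * real p"
    using p_pos by (simp add: s_def algebra_simps)
  ultimately have "t \<le> s" and "(s - t) * real p < 1"
    using p_pos by (simp_all add: s_def pos_le_divide_eq)
  moreover have "real (k + 1) * real k * (s - t) \<le> real p * (s - t)"
    using kp \<open>t \<le> s\<close> by (simp add: mult_right_mono)
  ultimately have "r_vec k s = r_vec k t"
    unfolding t_def by (intro r_vec_eq_right_of_grid_point) (simp_all add: mult.commute)
  then show "\<exists>m::int. r_vec k t = r_vec k (real_of_int m / real p)"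
    unfolding s_def by metis
qed

end
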